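(* Let $r,K,\mu$ satisfy Assumption 1. Let $\mathcal D=(0,1)\times(0,K)$, $Z_w=\{f_w=0\}\cap\mathcal D$, $Z_w^-=\{f_w<0\}\cap\mathcal D$, $Z_m=\{f_m=0\}\cap\mathcal D$, $Z_m^-=\{f_m<0\}\cap\mathcal D$, $\mathcal D_l=\{(w,m)\in\mathcal D: w\le w^*, m\ge m^*\}$ and $\mathcal D_r=\{(w,m)\in\mathcal D: w\ge w^*, m\le m^*\}$. Then $Z_m\cup Z_w\subset\mathcal D_l\cup\mathcal D_r$, $Z_w^-\cap\mathcal D_l\subset Z_m^-$, and $Z_m^-\cap\mathcal D_r\subset Z_w^-$.
   Context: Assumption 1: $r\in(1,\infty)$, $\mu\in\left(0,\min\left(\frac r2,1-\frac1r,1-K,K\right)\right)$, $K\in\left(0,\min\left(1,\frac{r}{r-1}\left(1-\frac{\mu}{1-\mu}\right)\right)\right)$. $f_w(w,m):=w(1-(w+m))+\mu(m-w)$, $f_m(w,m):=rm\left(1-\frac{w+m}{K}\right)+\mu(w-m)$; $(w^*,m^* )$ is the unique solution in $(0,1)\times(0,K)$ of $f_w=f_m=0$. *)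

theory Defs
  imports Complex_Main
begin

definition f_w :: "real \<Rightarrow> real \<Rightarrow> real \<Rightarrow> real" where
  "f_w \<mu> w m = w * (1 - (w + m)) + \<mu> * (m - w)"

definition f_m :: "real \<Rightarrow> real \<Rightarrow> real \<Rightarrow> real \<Rightarrow> real \<Rightarrow> real" where
  "f_m r K \<mu> w m = r * m * (1 - (w + m) / K) + \<mu> * (w - m)"

definition assumption1 :: "real \<Rightarrow> real \<Rightarrow> real \<Rightarrow> bool" where
  "assumption1 r K \<mu> \<longleftrightarrow>
     1 < r \<and>
     0 < \<mu> \<and> \<mu> < min (min (r / 2) (1 - 1 / r)) (min (1 - K) K) \<and>
     0 < K \<and> K < min 1 ((r / (r - 1)) * (1 - \<mu> / (1 - \<mu>)))"

definition dom_D :: "real \<Rightarrow> (real \<times> real) set" where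
  "dom_D K = {0<..<1} \<times> {0<..<K}"

end

theory Submission
  imports Defs
begin

text \<open>Both right-hand sides are logistic growth with exchange,
  \<open>a x (1 - (x + y) / c) + \<mu> (y - x)\<close>, with \<open>(a, c) = (1, 1)\<close> for \<open>w\<close> and \<open>(r, K)\<close> for \<open>m\<close>.
  Above the threshold \<open>a x / c > \<mu>\<close> (and only there, in the positive quadrant) the zero set is
  the graph \<open>y = g x\<close> of a decreasing function, which gives the first inclusion. For the other
  two, the second equation is nonpositive along this graph left of the equilibrium: otherwise it
  changes sign between there and the threshold, where the graph leaves the domain, producing a
  second equilibrium. Since the second equation is a concave quadratic in \<open>y\<close> with positive
  constant term, it stays negative above the graph, i.e. where the first one is negative.
  The two remaining inclusions are the same statement with the roles of \<open>w\<close> and \<open>m\<close> exchanged.\<close>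

definition logistic_exchange :: "real \<Rightarrow> real \<Rightarrow> real \<Rightarrow> real \<Rightarrow> real \<Rightarrow> real" where
  "logistic_exchange a c \<mu> x y = a * x * (1 - (x + y) / c) + \<mu> * (y - x)"

definition exchange_nullcline :: "real \<Rightarrow> real \<Rightarrow> real \<Rightarrow> real \<Rightarrow> real" where
  "exchange_nullcline a c \<mu> x = x * (a - \<mu> - a * x / c) / (a * x / c - \<mu>)"

lemma f_w_eq_logistic_exchange: "f_w \<mu> w m = logistic_exchange 1 1 \<mu> w m"
  unfolding f_w_def logistic_exchange_def by simp

lemma f_m_eq_logistic_exchange: "f_m r K \<mu> w m = logistic_exchange r K \<mu> m w"
  unfolding f_m_def logistic_exchange_def by (simp add: add.commute)

lemma logistic_exchange_pos_below_threshold: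
  assumes "0 < x" "0 < y" "a * x / c \<le> \<mu>" "2 * \<mu> < a"
  shows "0 < logistic_exchange a c \<mu> x y"
proof -
  have "logistic_exchange a c \<mu> x y = y * (\<mu> - a * x / c) + x * (a - a * x / c - \<mu>)"
    unfolding logistic_exchange_def by (simp add: algebra_simps add_divide_distrib)
  moreover have "0 \<le> y * (\<mu> - a * x / c)" using assms by simp
  moreover have "0 < x * (a - a * x / c - \<mu>)" using assms by simp
  ultimately show ?thesis by linarith
qed

lemma logistic_exchange_nonpos_imp_above_threshold:
  assumes "0 < x" "0 < y" "logistic_exchange a c \<mu> x y \<le> 0" "2 * \<mu> < a"
  shows "\<mu> < a * x / c"
  using logistic_exchange_pos_below_threshold[of x y a c \<mu>] assms by linarith

lemma logistic_exchange_neg_above_capacity: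
  assumes "0 < \<mu>" "\<mu> \<le> a" "0 < c" "c \<le> x" "0 \<le> y"
  shows "logistic_exchange a c \<mu> x y < 0"
proof -
  have "logistic_exchange a c \<mu> x y = a * x * (1 - x / c) - \<mu> * x + y * (\<mu> - a * x / c)"
    unfolding logistic_exchange_def by (simp add: algebra_simps add_divide_distrib)
  moreover have "a * x * (1 - x / c) \<le> 0"
    using assms by (intro mult_nonneg_nonpos) auto
  moreover have "y * (\<mu> - a * x / c) \<le> 0"
  proof -
    have "a * 1 \<le> a * (x / c)" using assms by (intro mult_left_mono) auto
    then show ?thesis using assms by (intro mult_nonneg_nonpos) auto
  qed
  moreover have "0 < \<mu> * x" using assms by simp
  ultimately show ?thesis by linarith
qed

lemma logistic_exchange_factor:
  assumes "c \<noteq> 0" "a * x / c \<noteq> \<mu>"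
  shows "logistic_exchange a c \<mu> x y = (a * x / c - \<mu>) * (exchange_nullcline a c \<mu> x - y)"
proof -
  have "a * x - \<mu> * c \<noteq> 0" using assms by (auto simp: field_simps)
  then show ?thesis using assms unfolding logistic_exchange_def exchange_nullcline_def
    by (simp add: field_simps)
qed

lemma exchange_nullcline_eq:
  assumes "a \<noteq> 0" "c \<noteq> 0" "a * x / c \<noteq> \<mu>"
  shows "exchange_nullcline a c \<mu> x
           = c / a * (a - 3 * \<mu> - (a * x / c - \<mu>) + \<mu> * (a - 2 * \<mu>) / (a * x / c - \<mu>))"
proof -
  have "a * x - \<mu> * c \<noteq> 0" using assms by (auto simp: field_simps)
  then show ?thesis using assms unfolding exchange_nullcline_def by (simp add: field_simps)
qed

lemma exchange_nullcline_antimono: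
  assumes "0 < \<mu>" "2 * \<mu> \<le> a" "0 < c" "\<mu> < a * x / c" "x \<le> x'"
  shows "exchange_nullcline a c \<mu> x' \<le> exchange_nullcline a c \<mu> x"
proof -
  have a: "0 < a" using assms by linarith
  have xx': "a * x / c \<le> a * x' / c"
    using assms a by (intro divide_right_mono mult_left_mono) auto
  have "\<mu> * (a - 2 * \<mu>) / (a * x' / c - \<mu>) \<le> \<mu> * (a - 2 * \<mu>) / (a * x / c - \<mu>)"
    using assms xx' by (intro divide_left_mono) auto
  then have "c / a * (a - 3 * \<mu> - (a * x' / c - \<mu>) + \<mu> * (a - 2 * \<mu>) / (a * x' / c - \<mu>))
           \<le> c / a * (a - 3 * \<mu> - (a * x / c - \<mu>) + \<mu> * (a - 2 * \<mu>) / (a * x / c - \<mu>))"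
    using xx' a assms by (intro mult_left_mono) auto
  then show ?thesis
    using exchange_nullcline_eq[of a c x \<mu>] exchange_nullcline_eq[of a c x' \<mu>] assms a xx'
    by simp
qed

lemma exchange_nullcline_unbounded:
  assumes "0 < \<mu>" "2 * \<mu> < a" "0 < c" "\<mu> < a * x / c"
  obtains x0 where "\<mu> < a * x0 / c" "x0 < x" "B \<le> exchange_nullcline a c \<mu> x0"
proof -
  define k where "k = \<mu> * (a - 2 * \<mu>)"
  define M where "M = \<bar>a * B / c\<bar> + 3 * \<mu> + 1"
  define t where "t = min ((a * x / c - \<mu>) / 2) (min 1 (k / M))"
  have a: "0 < a" using assms by linarith
  have k: "0 < k" using assms unfolding k_def by simp
  have M: "0 < M" using abs_ge_zero[of "a * B / c"] assms unfolding M_def by linarith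
  have "t \<le> (a * x / c - \<mu>) / 2" unfolding t_def by (rule min.cobounded1)
  moreover have "0 < t" "t \<le> 1" "t \<le> k / M" using assms k M unfolding t_def by auto
  ultimately have t: "0 < t" "t < a * x / c - \<mu>" "t \<le> 1" "t \<le> k / M" by auto
  define x0 where "x0 = c * (\<mu> + t) / a"
  have x0: "a * x0 / c = \<mu> + t" unfolding x0_def using a assms by simp
  have "M \<le> k / t" using t k M by (simp add: field_simps)
  then have "a * B / c \<le> a - 3 * \<mu> - t + k / t"
    using t(3) a abs_ge_self[of "a * B / c"] unfolding M_def by linarith
  then have "c / a * (a * B / c) \<le> c / a * (a - 3 * \<mu> - t + k / t)"
    using a assms by (intro mult_left_mono) auto
  moreover have "exchange_nullcline a c \<mu> x0 = c / a * (a - 3 * \<mu> - t + k / t)"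
    using exchange_nullcline_eq[of a c x0 \<mu>] x0 t a assms unfolding k_def by simp
  ultimately have "B \<le> exchange_nullcline a c \<mu> x0" using a assms by simp
  moreover have "x0 < x"
  proof -
    have "a * x0 / c < a * x / c" using x0 t by simp
    then show ?thesis using a assms by (simp add: divide_less_cancel)
  qed
  moreover have "\<mu> < a * x0 / c" using x0 t by simp
  ultimately show ?thesis using that by blast
qed

lemma logistic_exchange_neg_beyond:
  assumes "0 < a" "0 < c" "0 < \<mu>" "0 < y" "0 < u" "u < x" "logistic_exchange a c \<mu> u y \<le> 0"
  shows "logistic_exchange a c \<mu> x y < 0"
proof -
  have quot: "logistic_exchange a c \<mu> z y / z = a * (1 - (z + y) / c) + \<mu> * (y / z - 1)"
    if "0 < z" for z
    using that unfolding logistic_exchange_def by (simp add: field_simps)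
  have "a * (1 - (x + y) / c) < a * (1 - (u + y) / c)"
    using assms by (simp add: divide_strict_right_mono)
  moreover have "\<mu> * (y / x - 1) \<le> \<mu> * (y / u - 1)"
    using assms by (intro mult_left_mono) (auto intro: divide_left_mono)
  moreover have "logistic_exchange a c \<mu> u y / u \<le> 0"
    using assms by (simp add: divide_nonpos_pos)
  ultimately have "logistic_exchange a c \<mu> x y / x < 0"
    using quot[of u] quot[of x] assms by linarith
  then show ?thesis using assms by (simp add: divide_less_0_iff)
qed

lemma logistic_exchange_zero_cases:
  assumes "0 < \<mu>" "2 * \<mu> < a" "0 < c"
    and "0 < xs" "0 < ys" "logistic_exchange a c \<mu> xs ys = 0"
    and "0 < x" "0 < y" "logistic_exchange a c \<mu> x y = 0"
  shows "x \<le> xs \<and> ys \<le> y \<or> xs \<le> x \<and> y \<le> ys"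
proof -
  have thr: "\<mu> < a * x / c" "\<mu> < a * xs / c"
    using logistic_exchange_nonpos_imp_above_threshold assms by auto
  have "exchange_nullcline a c \<mu> x = y" "exchange_nullcline a c \<mu> xs = ys"
    using logistic_exchange_factor[of c a x \<mu> y] logistic_exchange_factor[of c a xs \<mu> ys] thr assms
    by auto
  then show ?thesis
    using exchange_nullcline_antimono[of \<mu> a c x xs] exchange_nullcline_antimono[of \<mu> a c xs x]
      thr assms by (cases "x \<le> xs") auto
qed

lemma exchange_nullcline_crossing_nonpos:
  fixes a c b d \<mu> xs ys x :: real
  defines "F1 \<equiv> logistic_exchange a c \<mu>" and "F2 \<equiv> logistic_exchange b d \<mu>"
    and "g \<equiv> exchange_nullcline a c \<mu>"
  assumes \<mu>: "0 < \<mu>" "2 * \<mu> < a" "\<mu> \<le> b" and cap: "0 < c" "0 < d"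
    and star: "0 < xs" "0 < ys" "F1 xs ys = 0" "F2 ys xs = 0"
    and unique: "\<And>x y. 0 < x \<Longrightarrow> x < c \<Longrightarrow> 0 < y \<Longrightarrow> y < d \<Longrightarrow> F1 x y = 0 \<Longrightarrow> F2 y x = 0
                   \<Longrightarrow> x = xs"
    and x: "\<mu> < a * x / c" "x \<le> xs" "xs < c"
  shows "F2 (g x) x \<le> 0"
proof (rule ccontr)
  define \<phi> where "\<phi> z = F2 (g z) z" for z
  assume "\<not> F2 (g x) x \<le> 0"
  then have pos: "0 < \<phi> x" unfolding \<phi>_def by simp
  have thr_star: "\<mu> < a * xs / c"
    using logistic_exchange_nonpos_imp_above_threshold star \<mu> unfolding F1_def by auto
  have g_star: "g xs = ys"
    using logistic_exchange_factor[of c a xs \<mu> ys] thr_star star cap unfolding F1_def g_def by simp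
  have "x \<noteq> xs" using pos star g_star unfolding \<phi>_def by auto
  with x have x_lt: "x < xs" by simp
  obtain x0 where x0: "\<mu> < a * x0 / c" "x0 < x" "d \<le> g x0"
    using exchange_nullcline_unbounded[OF \<mu>(1,2) cap(1) x(1)] unfolding g_def by blast
  have "0 < x0"
  proof -
    have "0 < a * x0" using x0(1) \<mu> cap by (smt (verit) divide_nonpos_pos)
    then show ?thesis using \<mu> by (simp add: zero_less_mult_iff)
  qed
  then have neg: "\<phi> x0 < 0"
    using logistic_exchange_neg_above_capacity[OF \<mu>(1,3) cap(2) x0(3)] unfolding \<phi>_def F2_def by simp
  have thr_mono: "\<mu> < a * z / c" if "x0 \<le> z" for z
  proof -
    have "a * x0 / c \<le> a * z / c"
      using that \<mu> cap by (intro divide_right_mono mult_left_mono) auto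
    then show ?thesis using x0(1) by linarith
  qed
  have "continuous_on {x0..x} \<phi>"
  proof -
    have "a * z / c - \<mu> \<noteq> 0" if "z \<in> {x0..x}" for z using thr_mono that by force
    then show ?thesis
      unfolding \<phi>_def F2_def g_def logistic_exchange_def exchange_nullcline_def
      using cap by (intro continuous_intros) auto
  qed
  then obtain z where z: "x0 \<le> z" "z \<le> x" "\<phi> z = 0"
    using IVT'[of \<phi> x0 0 x] neg pos x0(2) by auto
  have z_thr: "\<mu> < a * z / c" using thr_mono z(1) .
  have "ys \<le> g z"
    using exchange_nullcline_antimono[OF \<mu>(1) _ cap(1) z_thr, of xs] z(2) x(2) g_star \<mu>(2)
    unfolding g_def by simp
  moreover have "g z < d"
  proof (rule ccontr)
    assume "\<not> g z < d"
    then have "\<phi> z < 0"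
      using logistic_exchange_neg_above_capacity[OF \<mu>(1,3) cap(2), of "g z" z] \<open>0 < x0\<close> z(1)
      unfolding \<phi>_def F2_def by simp
    then show False using z(3) by simp
  qed
  moreover have "F1 z (g z) = 0"
    using logistic_exchange_factor[of c a z \<mu> "g z"] z_thr cap unfolding F1_def g_def by simp
  ultimately have "z = xs"
    using unique[of z "g z"] z x_lt x(3) \<open>0 < x0\<close> star(2) unfolding \<phi>_def by simp
  then show False using z(2) x_lt by simp
qed

lemma logistic_exchange_neg_transfer:
  fixes a c b d \<mu> xs ys x y :: real
  defines "F1 \<equiv> logistic_exchange a c \<mu>" and "F2 \<equiv> logistic_exchange b d \<mu>"
  assumes \<mu>: "0 < \<mu>" "2 * \<mu> < a" "2 * \<mu> < b" and cap: "0 < c" "0 < d"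
    and star: "0 < xs" "xs < c" "0 < ys" "F1 xs ys = 0" "F2 ys xs = 0"
    and unique: "\<And>x y. 0 < x \<Longrightarrow> x < c \<Longrightarrow> 0 < y \<Longrightarrow> y < d \<Longrightarrow> F1 x y = 0 \<Longrightarrow> F2 y x = 0
                   \<Longrightarrow> x = xs"
    and xy: "0 < x" "x \<le> xs" "0 < y" "F1 x y < 0"
  shows "F2 y x < 0"
proof -
  define g where "g = exchange_nullcline a c \<mu>"
  have thr: "\<mu> < a * x / c" "\<mu> < a * xs / c"
    using logistic_exchange_nonpos_imp_above_threshold xy star \<mu> unfolding F1_def by auto
  have "g x < y"
    using logistic_exchange_factor[of c a x \<mu> y] thr xy cap
    unfolding F1_def g_def by (simp add: mult_less_0_iff)
  moreover have "0 < g x"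
  proof -
    have "g xs = ys"
      using logistic_exchange_factor[of c a xs \<mu> ys] thr star cap unfolding F1_def g_def by simp
    then show ?thesis
      using exchange_nullcline_antimono[of \<mu> a c x xs] thr xy star \<mu> cap unfolding g_def by simp
  qed
  moreover have "F2 (g x) x \<le> 0"
    using exchange_nullcline_crossing_nonpos[OF \<mu>(1,2) _ cap star(1,3)
        star(4,5)[unfolded F1_def F2_def] unique[unfolded F1_def F2_def] thr(1) xy(2) star(2)] \<mu>
    unfolding F2_def g_def by simp
  ultimately show ?thesis
    using logistic_exchange_neg_beyond[of b d \<mu> x "g x" y] \<mu> cap xy unfolding F2_def by simp
qed

theorem mainTheorem19:
  fixes r K \<mu> ws ms :: real
  assumes A1: "assumption1 r K \<mu>"
    and star_in: "(ws, ms) \<in> dom_D K"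
    and star_w: "f_w \<mu> ws ms = 0" and star_m: "f_m r K \<mu> ws ms = 0"
    and star_unique: "\<And>w m. (w, m) \<in> dom_D K \<Longrightarrow> f_w \<mu> w m = 0 \<Longrightarrow> f_m r K \<mu> w m = 0
                         \<Longrightarrow> w = ws \<and> m = ms"
  defines "Zw \<equiv> {(w, m). (w, m) \<in> dom_D K \<and> f_w \<mu> w m = 0}"
    and "Zw_neg \<equiv> {(w, m). (w, m) \<in> dom_D K \<and> f_w \<mu> w m < 0}"
    and "Zm \<equiv> {(w, m). (w, m) \<in> dom_D K \<and> f_m r K \<mu> w m = 0}"
    and "Zm_neg \<equiv> {(w, m). (w, m) \<in> dom_D K \<and> f_m r K \<mu> w m < 0}"
    and "Dl \<equiv> {(w, m). (w, m) \<in> dom_D K \<and> w \<le> ws \<and> m \<ge> ms}"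
    and "Dr \<equiv> {(w, m). (w, m) \<in> dom_D K \<and> w \<ge> ws \<and> m \<le> ms}"
  shows "Zm \<union> Zw \<subseteq> Dl \<union> Dr \<and> Zw_neg \<inter> Dl \<subseteq> Zm_neg \<and> Zm_neg \<inter> Dr \<subseteq> Zw_neg"
proof -
  have \<mu>: "0 < \<mu>" "2 * \<mu> < 1" "2 * \<mu> < r" and K: "0 < K"
    using A1 unfolding assumption1_def by (auto simp: min_def split: if_splits)
  have D: "(w, m) \<in> dom_D K \<longleftrightarrow> 0 < w \<and> w < 1 \<and> 0 < m \<and> m < K" for w m
    unfolding dom_D_def by auto
  note F = f_w_eq_logistic_exchange f_m_eq_logistic_exchange
  have star: "0 < ws" "ws < 1" "0 < ms" "ms < K"
    using star_in unfolding D by auto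
  note star_eq = star_w[unfolded F] star_m[unfolded F]
  have unique_w: "w = ws"
    if "0 < w" "w < 1" "0 < m" "m < K" "logistic_exchange 1 1 \<mu> w m = 0"
       "logistic_exchange r K \<mu> m w = 0" for w m
    using star_unique[of w m] that unfolding D F by blast
  have unique_m: "m = ms"
    if "0 < m" "m < K" "0 < w" "w < 1" "logistic_exchange r K \<mu> m w = 0"
       "logistic_exchange 1 1 \<mu> w m = 0" for m w
    using star_unique[of w m] that unfolding D F by blast
  have "Zm \<union> Zw \<subseteq> Dl \<union> Dr"
    using logistic_exchange_zero_cases[OF \<mu>(1,2) zero_less_one star(1,3) star_eq(1)]
      logistic_exchange_zero_cases[OF \<mu>(1,3) K star(3,1) star_eq(2)]
    unfolding Zm_def Zw_def Dl_def Dr_def D F by auto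
  moreover have "Zw_neg \<inter> Dl \<subseteq> Zm_neg"
    using logistic_exchange_neg_transfer[OF \<mu> zero_less_one K star(1,2,3) star_eq unique_w]
    unfolding Zw_neg_def Zm_neg_def Dl_def D F by auto
  moreover have "Zm_neg \<inter> Dr \<subseteq> Zw_neg"
    using logistic_exchange_neg_transfer[OF \<mu>(1,3,2) K zero_less_one star(3,4,1) star_eq(2,1) unique_m]
    unfolding Zw_neg_def Zm_neg_def Dr_def D F by auto
  ultimately show ?thesis by blast
qed

end
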